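(* Let $(\mathcal G,c,v_0,v_1)$ be a properly embedded doubly marked finite weighted planar map (with properly embedded dual) such that for every $x\in\mathcal V\mathcal G$ every point $p$ of the metric graph with $\mathfrak h(p)=\mathfrak h(x)$ is a vertex. Let $a\in(0,1)$ with $\mathfrak h^{-1}(a)\subset\mathcal V\mathcal G$ nonempty, and let $X^{\mu_a}$ be the random walk on $(\mathcal G,c)$ with $X_0$ distributed according to $\mu_a$. Let $N\in\mathbb N$ and $a_0=a,a_1,\dots,a_N\in(0,1)$ be admissible, i.e. $\mathbb P_{\mu_a}(\mathfrak h(X_{n+1})=a_{n+1}\mid\mathfrak h(X_n)=a_n)>0$ for $n=0,\dots,N-1$. Then for every $i\in\{0,\dots,N\}$ and every $x_i\in\mathfrak h^{-1}(a_i)$, $$\mathbb P_{\mu_a}\big(X_i=x_i\ \big|\ \{\mathfrak h(X_n)=a_n\}_{n=1}^N\big)=\mu_{a_i}(x_i).$$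
   Context: A doubly marked finite weighted planar map $(\mathcal G,c,v_0,v_1)$ is a finite connected planar multigraph with positive edge conductances and marked vertices $v_0,v_1$, properly embedded in $\mathcal C_{2\pi}=\mathbb R/2\pi\mathbb Z\times\mathbb R$ (non-crossing edges, $v_0$ at $-\infty$, $v_1$ at $+\infty$), with its dual properly embedded (each edge crossed once by a dual edge joining its two incident faces). The random walk moves $x\to y$ with probability $c_{xy}/\pi(x)$. Voltage $\mathfrak h$: $\mathfrak h(v_0)=0$, $\mathfrak h(v_1)=1$, harmonic elsewhere; extended to the metric graph $\mathbb G$ (each edge an isometric copy of $[0,1]$) by linear interpolation along edges. $\nabla\mathfrak h(e)=c_e(\mathfrak h(e^+)-\mathfrak h(e^-))$; an edge is harmonically oriented if $\mathfrak h(e^+)\ge\mathfrak h(e^-)$; $\eta=\sum\nabla\mathfrak h(e)$ over harmonically oriented edges with tail $v_0$. For $x\in\mathcal V\mathcal G$, $\mathrm{length}(x)=\sum\nabla\mathfrak h(e)$ over harmonically oriented edges with head $x$ (the length of the horizontal segment of $x$ in the Smith diagram). For $a\in(0,1)$, $\mu_a(x)=\mathrm{length}(x)/\eta$ for $x\in\mathfrak h^{-1}(a)$; this is a probability measure on $\mathfrak h^{-1}(a)$. *)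

theory Defs
  imports "HOL-Analysis.Analysis"
begin

text \<open>A finite weighted multigraph is given by a vertex set V, an edge index set E,
  an endpoint map ends (each edge gets an arbitrary reference orientation) and
  conductances c.\<close>

definition cond :: "'e set \<Rightarrow> ('e \<Rightarrow> 'v \<times> 'v) \<Rightarrow> ('e \<Rightarrow> real) \<Rightarrow> 'v \<Rightarrow> 'v \<Rightarrow> real" where
  "cond E ends c x y = (\<Sum>e\<in>{e\<in>E. ends e = (x,y) \<or> ends e = (y,x)}. c e)"

definition stat :: "'v set \<Rightarrow> 'e set \<Rightarrow> ('e \<Rightarrow> 'v \<times> 'v) \<Rightarrow> ('e \<Rightarrow> real) \<Rightarrow> 'v \<Rightarrow> real" where
  "stat V E ends c x = (\<Sum>y\<in>V. cond E ends c x y)"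

definition trans :: "'v set \<Rightarrow> 'e set \<Rightarrow> ('e \<Rightarrow> 'v \<times> 'v) \<Rightarrow> ('e \<Rightarrow> real) \<Rightarrow> 'v \<Rightarrow> 'v \<Rightarrow> real" where
  "trans V E ends c x y = cond E ends c x y / stat V E ends c x"

definition adj :: "'e set \<Rightarrow> ('e \<Rightarrow> 'v \<times> 'v) \<Rightarrow> ('v \<times> 'v) set" where
  "adj E ends = {(u,w). \<exists>e\<in>E. ends e = (u,w) \<or> ends e = (w,u)}"

definition graph_connected :: "'v set \<Rightarrow> 'e set \<Rightarrow> ('e \<Rightarrow> 'v \<times> 'v) \<Rightarrow> bool" where
  "graph_connected V E ends = (\<forall>x\<in>V. \<forall>y\<in>V. (x,y) \<in> (adj E ends)\<^sup>*)"

definition plane_embeddable :: "'v set \<Rightarrow> 'e set \<Rightarrow> ('e \<Rightarrow> 'v \<times> 'v) \<Rightarrow> bool" where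
  "plane_embeddable V E ends =
    (\<exists>(pos :: 'v \<Rightarrow> complex) (\<gamma> :: 'e \<Rightarrow> real \<Rightarrow> complex).
       inj_on pos V \<and>
       (\<forall>e\<in>E. simple_path (\<gamma> e) \<and> pathstart (\<gamma> e) = pos (fst (ends e))
                \<and> pathfinish (\<gamma> e) = pos (snd (ends e))) \<and>
       (\<forall>e\<in>E. \<forall>e'\<in>E. e \<noteq> e' \<longrightarrow> \<gamma> e ` {0<..<1} \<inter> \<gamma> e' ` {0<..<1} = {}) \<and>
       (\<forall>e\<in>E. \<gamma> e ` {0<..<1} \<inter> pos ` V = {}))"

definition doubly_marked_map ::
  "'v set \<Rightarrow> 'e set \<Rightarrow> ('e \<Rightarrow> 'v \<times> 'v) \<Rightarrow> ('e \<Rightarrow> real) \<Rightarrow> 'v \<Rightarrow> 'v \<Rightarrow> bool" where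
  "doubly_marked_map V E ends c v0 v1 =
    (finite V \<and> finite E \<and> (\<forall>e\<in>E. fst (ends e) \<in> V \<and> snd (ends e) \<in> V)
     \<and> (\<forall>e\<in>E. c e > 0) \<and> v0 \<in> V \<and> v1 \<in> V \<and> v0 \<noteq> v1
     \<and> graph_connected V E ends \<and> plane_embeddable V E ends)"

definition is_voltage ::
  "'v set \<Rightarrow> 'e set \<Rightarrow> ('e \<Rightarrow> 'v \<times> 'v) \<Rightarrow> ('e \<Rightarrow> real) \<Rightarrow> 'v \<Rightarrow> 'v \<Rightarrow> ('v \<Rightarrow> real) \<Rightarrow> bool" where
  "is_voltage V E ends c v0 v1 h =
    (h v0 = 0 \<and> h v1 = 1 \<and>
     (\<forall>x\<in>V - {v0, v1}. h x = (\<Sum>y\<in>V. trans V E ends c x y * h y)))"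

text \<open>Oriented edges (darts): (e, True) has the reference orientation, (e, False) the reversed one.\<close>
definition dtail :: "('e \<Rightarrow> 'v \<times> 'v) \<Rightarrow> 'e \<times> bool \<Rightarrow> 'v" where
  "dtail ends d = (if snd d then fst (ends (fst d)) else snd (ends (fst d)))"

definition dhead :: "('e \<Rightarrow> 'v \<times> 'v) \<Rightarrow> 'e \<times> bool \<Rightarrow> 'v" where
  "dhead ends d = (if snd d then snd (ends (fst d)) else fst (ends (fst d)))"

definition grad :: "('e \<Rightarrow> 'v \<times> 'v) \<Rightarrow> ('e \<Rightarrow> real) \<Rightarrow> ('v \<Rightarrow> real) \<Rightarrow> 'e \<times> bool \<Rightarrow> real" where
  "grad ends c h d = c (fst d) * (h (dhead ends d) - h (dtail ends d))"

definition harm_oriented :: "('e \<Rightarrow> 'v \<times> 'v) \<Rightarrow> ('v \<Rightarrow> real) \<Rightarrow> 'e \<times> bool \<Rightarrow> bool" where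
  "harm_oriented ends h d = (h (dhead ends d) \<ge> h (dtail ends d))"

definition seg_length ::
  "'e set \<Rightarrow> ('e \<Rightarrow> 'v \<times> 'v) \<Rightarrow> ('e \<Rightarrow> real) \<Rightarrow> ('v \<Rightarrow> real) \<Rightarrow> 'v \<Rightarrow> real" where
  "seg_length E ends c h x =
     (\<Sum>d\<in>{d \<in> E \<times> UNIV. harm_oriented ends h d \<and> dhead ends d = x}. grad ends c h d)"

definition eta ::
  "'e set \<Rightarrow> ('e \<Rightarrow> 'v \<times> 'v) \<Rightarrow> ('e \<Rightarrow> real) \<Rightarrow> ('v \<Rightarrow> real) \<Rightarrow> 'v \<Rightarrow> real" where
  "eta E ends c h v0 =
     (\<Sum>d\<in>{d \<in> E \<times> UNIV. harm_oriented ends h d \<and> dtail ends d = v0}. grad ends c h d)"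

definition mu ::
  "'v set \<Rightarrow> 'e set \<Rightarrow> ('e \<Rightarrow> 'v \<times> 'v) \<Rightarrow> ('e \<Rightarrow> real) \<Rightarrow> ('v \<Rightarrow> real) \<Rightarrow> 'v \<Rightarrow> real \<Rightarrow> 'v \<Rightarrow> real" where
  "mu V E ends c h v0 a x =
     (if x \<in> V \<and> h x = a then seg_length E ends c h x / eta E ends c h v0 else 0)"

definition walk_paths :: "'v set \<Rightarrow> nat \<Rightarrow> 'v list set" where
  "walk_paths V N = {xs. length xs = Suc N \<and> set xs \<subseteq> V}"

definition walk_prob ::
  "'v set \<Rightarrow> 'e set \<Rightarrow> ('e \<Rightarrow> 'v \<times> 'v) \<Rightarrow> ('e \<Rightarrow> real) \<Rightarrow> ('v \<Rightarrow> real) \<Rightarrow> nat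
   \<Rightarrow> ('v list \<Rightarrow> bool) \<Rightarrow> real" where
  "walk_prob V E ends c init N A =
     (\<Sum>xs\<in>{xs \<in> walk_paths V N. A xs}.
        init (xs ! 0) * (\<Prod>n<N. trans V E ends c (xs ! n) (xs ! Suc n)))"

end

theory Submission
  imports Defs
begin

text \<open>No edge of the metric graph passes through the level of a vertex, so from a vertex at level
  b in (0,1) the walk can only jump to the nearest occupied level above (at distance u) or
  below (at distance d). Harmonicity says that the current length(x) entering x from below
  equals the current leaving it upwards; hence length(x) = u d / (u + d) * pi(x), and the walk
  moves up with probability d / (u + d), whatever x is. So the levels form a Markov chain with
  kernel Q = level_trans, and one step of the walk maps mu_b, restricted to the next level b',
  to Q(b, b') mu_b'. By induction, the probability of following the levels a_0, ..., a_N while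
  sitting at x at time i is mu_(a_i)(x) times the product of the Q(a_n, a_(n+1)), whereas the
  probability of just following the levels is that product itself, because mu_a has total mass
  1: the current through any level equals the current eta leaving v0.\<close>

lemma finite_walk_paths: "finite V \<Longrightarrow> finite (walk_paths V N)"
  unfolding walk_paths_def using finite_lists_length_eq[of V "Suc N"] by (simp add: conj_commute)

lemma walk_paths_nth_in: "xs \<in> walk_paths V N \<Longrightarrow> k \<le> N \<Longrightarrow> xs ! k \<in> V"
  unfolding walk_paths_def by (auto intro!: nth_mem[THEN subsetD[rotated]])

lemma walk_paths_Suc: "walk_paths V (Suc N) = (\<lambda>(x, ys). x # ys) ` (V \<times> walk_paths V N)"
  unfolding walk_paths_def by (auto simp: length_Suc_conv image_iff)

lemma walk_prob_eq_sum_if: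
  assumes "finite V"
  shows "walk_prob V E ends c init N A =
    (\<Sum>xs\<in>walk_paths V N.
       if A xs then init (xs ! 0) * (\<Prod>n<N. trans V E ends c (xs ! n) (xs ! Suc n)) else 0)"
  unfolding walk_prob_def by (simp add: sum.inter_filter[symmetric] finite_walk_paths assms)

lemma walk_prob_cong:
  assumes "\<And>x. x \<in> V \<Longrightarrow> init x = init' x" and "\<And>xs. xs \<in> walk_paths V N \<Longrightarrow> A xs = A' xs"
  shows "walk_prob V E ends c init N A = walk_prob V E ends c init' N A'"
  unfolding walk_prob_def using assms walk_paths_nth_in[of _ V N 0]
  by (intro sum.cong) auto

lemma walk_prob_restrict_start:
  assumes "finite V"
  shows "walk_prob V E ends c init N (\<lambda>xs. P (xs ! 0) \<and> A xs) =
         walk_prob V E ends c (\<lambda>y. if P y then init y else 0) N A"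
  unfolding walk_prob_eq_sum_if[OF assms] by (intro sum.cong) auto

lemma walk_prob_0:
  assumes "finite V"
  shows "walk_prob V E ends c init 0 A = (\<Sum>x\<in>V. if A [x] then init x else 0)"
proof -
  have "walk_paths V 0 = (\<lambda>x. [x]) ` V"
    unfolding walk_paths_def by (auto simp: length_Suc_conv)
  then show ?thesis
    unfolding walk_prob_eq_sum_if[OF assms] by (simp add: sum.reindex inj_on_def cong: if_cong)
qed

lemma walk_prob_Suc:
  assumes "finite V" and "\<And>x ys. x \<in> V \<Longrightarrow> ys \<in> walk_paths V N \<Longrightarrow> A (x # ys) = A' ys"
  shows "walk_prob V E ends c init (Suc N) A =
    walk_prob V E ends c (\<lambda>y. \<Sum>x\<in>V. init x * trans V E ends c x y) N A'"
proof -
  let ?p = "trans V E ends c"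
  let ?w = "\<lambda>ys. \<Prod>n<N. ?p (ys ! n) (ys ! Suc n)"
  have "walk_prob V E ends c init (Suc N) A =
      (\<Sum>(x, ys)\<in>V \<times> walk_paths V N. if A' ys then init x * ?p x (ys ! 0) * ?w ys else 0)"
    unfolding walk_prob_eq_sum_if[OF assms(1)] walk_paths_Suc
    by (subst sum.reindex)
      (auto simp: inj_on_def prod.lessThan_Suc_shift assms(2) simp del: prod.lessThan_Suc intro!: sum.cong)
  also have "\<dots> = (\<Sum>ys\<in>walk_paths V N. \<Sum>x\<in>V. if A' ys then init x * ?p x (ys ! 0) * ?w ys else 0)"
    by (subst sum.cartesian_product[symmetric]) (rule sum.swap)
  also have "\<dots> = walk_prob V E ends c (\<lambda>y. \<Sum>x\<in>V. init x * ?p x y) N A'"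
    unfolding walk_prob_eq_sum_if[OF assms(1)] by (intro sum.cong) (auto simp: sum_distrib_right)
  finally show ?thesis .
qed

lemma walk_prob_Suc_level:
  assumes "finite V"
    and "\<And>x ys. x \<in> V \<Longrightarrow> ys \<in> walk_paths V N \<Longrightarrow> A (x # ys) = (h (ys ! 0) = b \<and> A' ys)"
  shows "walk_prob V E ends c init (Suc N) A =
    walk_prob V E ends c (\<lambda>y. if h y = b then \<Sum>x\<in>V. init x * trans V E ends c x y else 0) N A'"
proof -
  have "walk_prob V E ends c init (Suc N) A =
      walk_prob V E ends c (\<lambda>y. \<Sum>x\<in>V. init x * trans V E ends c x y) N
        (\<lambda>ys. h (ys ! 0) = b \<and> A' ys)"
    by (rule walk_prob_Suc) (use assms in auto)
  also have "\<dots> = walk_prob V E ends c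
      (\<lambda>y. if h y = b then \<Sum>x\<in>V. init x * trans V E ends c x y else 0) N A'"
    by (rule walk_prob_restrict_start[OF assms(1)])
  finally show ?thesis .
qed

lemma ball_atLeastAtMost_Suc:
  "(\<forall>n\<in>{1..Suc N}. P n) = (P 1 \<and> (\<forall>n\<in>{1..N}. P (Suc n)))"
proof -
  have "{1..Suc N} = insert 1 (Suc ` {1..N})"
    by (simp add: image_Suc_atLeastAtMost atLeastAtMost_insertL)
  then show ?thesis by (simp del: image_Suc_atLeastAtMost)
qed

locale voltage_network =
  fixes V :: "'v set" and E :: "'e set" and ends :: "'e \<Rightarrow> 'v \<times> 'v"
    and c :: "'e \<Rightarrow> real" and v0 v1 :: 'v and h :: "'v \<Rightarrow> real"
  assumes finite_V: "finite V" and finite_E: "finite E"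
    and ends_in_V: "\<forall>e\<in>E. fst (ends e) \<in> V \<and> snd (ends e) \<in> V"
    and c_pos: "\<forall>e\<in>E. c e > 0" and v0_in_V: "v0 \<in> V" and v1_in_V: "v1 \<in> V"
    and voltage: "is_voltage V E ends c v0 v1 h"
    and edges_avoid_vertex_levels: "\<forall>x\<in>V. \<forall>e\<in>E. \<forall>t::real. 0 < t \<and> t < 1 \<longrightarrow>
           (1 - t) * h (fst (ends e)) + t * h (snd (ends e)) \<noteq> h x"
begin

abbreviation "cd \<equiv> cond E ends c"
abbreviation "st \<equiv> stat V E ends c"
abbreviation "p \<equiv> trans V E ends c"

lemma h_v0: "h v0 = 0" and h_v1: "h v1 = 1"
  using voltage by (auto simp: is_voltage_def)

lemma harmonic: "x \<in> V - {v0, v1} \<Longrightarrow> h x = (\<Sum>y\<in>V. p x y * h y)"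
  using voltage by (auto simp: is_voltage_def)

lemma cond_sym: "cd x y = cd y x"
  unfolding cond_def by (simp add: disj_commute)

lemma cond_nonneg: "cd x y \<ge> 0"
  unfolding cond_def using c_pos by (auto intro!: sum_nonneg simp: less_imp_le)

lemma stat_eq: "st x = (\<Sum>y\<in>V. cd x y)"
  unfolding stat_def ..

lemma trans_nonneg: "p x y \<ge> 0"
  unfolding trans_def stat_def by (simp add: cond_nonneg sum_nonneg)

lemma cond_nonzero_edge:
  assumes "cd x y \<noteq> 0"
  obtains e where "e \<in> E" "ends e = (x, y) \<or> ends e = (y, x)"
proof -
  have "{e\<in>E. ends e = (x, y) \<or> ends e = (y, x)} \<noteq> {}"
    using assms unfolding cond_def by (metis sum.empty)
  then show ?thesis using that by blast
qed

lemma cond_nonzero_in_V: "cd x y \<noteq> 0 \<Longrightarrow> x \<in> V \<and> y \<in> V"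
  by (erule cond_nonzero_edge) (use ends_in_V in force)

lemma edge_skips_no_level:
  assumes e: "e \<in> E" and z: "z \<in> V"
    and between: "min (h (fst (ends e))) (h (snd (ends e))) < h z"
      "h z < max (h (fst (ends e))) (h (snd (ends e)))"
  shows False
proof -
  define u w where "u = h (fst (ends e))" and "w = h (snd (ends e))"
  define t where "t = (h z - u) / (w - u)"
  have "0 < t" "t < 1" "(1 - t) * u + t * w = h z"
    using between unfolding t_def u_def[symmetric] w_def[symmetric]
    by (auto simp: field_simps min_def max_def split: if_splits)
  then show False using edges_avoid_vertex_levels z e unfolding u_def w_def by blast
qed

lemma edge_levels_distinct:
  assumes "e \<in> E" shows "h (fst (ends e)) \<noteq> h (snd (ends e))"
proof
  assume "h (fst (ends e)) = h (snd (ends e))"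
  then have "(1 - 1/2) * h (fst (ends e)) + 1/2 * h (snd (ends e)) = h (fst (ends e))"
    by simp
  then show False using edges_avoid_vertex_levels ends_in_V assms
    by (metis field_sum_of_halves half_gt_zero_iff less_add_same_cancel1 zero_less_one)
qed

lemma cond_nonzero_levels_distinct: "cd x y \<noteq> 0 \<Longrightarrow> h x \<noteq> h y"
  by (erule cond_nonzero_edge) (use edge_levels_distinct in force)

lemma cond_nonzero_skips_no_level:
  assumes "cd x y \<noteq> 0" "z \<in> V" "h x < h z" "h z < h y"
  shows False
proof -
  obtain e where "e \<in> E" "ends e = (x, y) \<or> ends e = (y, x)"
    using assms(1) by (rule cond_nonzero_edge)
  then show False
    using edge_skips_no_level[of e z] assms by auto
qed

lemma sum_edge_endpoints:
  fixes k :: real and m :: "'v \<Rightarrow> real"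
  assumes "u \<in> V" "w \<in> V" "m x = 0"
  shows "(\<Sum>y\<in>V. if (u, w) = (x, y) \<or> (u, w) = (y, x) then k * m y else 0) =
     (if w = x then k * m u else 0) + (if u = x then k * m w else 0)"
proof -
  have "(if (u, w) = (x, y) \<or> (u, w) = (y, x) then k * m y else 0) =
      (if w = x then if y = u then k * m u else 0 else 0) +
      (if u = x then if y = w then k * m w else 0 else 0)" for y
    using assms(3) by auto
  then show ?thesis using assms(1,2) by (simp add: sum.distrib finite_V)
qed

lemma cond_weighted_sum_eq_edge_sum:
  fixes m :: "'v \<Rightarrow> real"
  assumes "m x = 0"
  shows "(\<Sum>y\<in>V. cd x y * m y) =
    (\<Sum>e\<in>E. (if snd (ends e) = x then c e * m (fst (ends e)) else 0)
           + (if fst (ends e) = x then c e * m (snd (ends e)) else 0))"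
proof -
  have "(\<Sum>y\<in>V. cd x y * m y) =
      (\<Sum>y\<in>V. \<Sum>e\<in>E. if ends e = (x, y) \<or> ends e = (y, x) then c e * m y else 0)"
    unfolding cond_def sum_distrib_right by (simp add: sum.inter_filter finite_E)
  also have "\<dots> = (\<Sum>e\<in>E. \<Sum>y\<in>V. if ends e = (x, y) \<or> ends e = (y, x) then c e * m y else 0)"
    by (rule sum.swap)
  also have "\<dots> = (\<Sum>e\<in>E. (if snd (ends e) = x then c e * m (fst (ends e)) else 0)
           + (if fst (ends e) = x then c e * m (snd (ends e)) else 0))"
    using sum_edge_endpoints[of "fst (ends e)" "snd (ends e)" m x "c e" for e] ends_in_V assms
    by (intro sum.cong) auto
  finally show ?thesis .
qed

lemma sum_darts:
  "(\<Sum>d\<in>{d \<in> E \<times> UNIV. P d}. g d) =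
    (\<Sum>e\<in>E. (if P (e, True) then g (e, True) else 0) + (if P (e, False) then g (e, False) else 0))"
proof -
  have "(\<Sum>d\<in>{d \<in> E \<times> UNIV. P d}. g d) = (\<Sum>d\<in>E \<times> UNIV. if P d then g d else 0)"
    by (simp add: sum.inter_filter[symmetric] finite_E)
  also have "\<dots> = (\<Sum>e\<in>E. \<Sum>b\<in>UNIV. if P (e, b) then g (e, b) else 0)"
    by (subst sum.cartesian_product) (simp add: case_prod_unfold cong: if_cong)
  finally show ?thesis by (simp add: UNIV_bool add.commute)
qed

lemma seg_length_eq: "seg_length E ends c h x = (\<Sum>y\<in>V. cd x y * max 0 (h x - h y))"
  unfolding seg_length_def sum_darts
  by (subst cond_weighted_sum_eq_edge_sum[where m = "\<lambda>y. max 0 (h x - h y)"])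
    (auto intro!: sum.cong simp: harm_oriented_def dhead_def dtail_def grad_def max_def)

lemma eta_eq: "eta E ends c h v0 = (\<Sum>y\<in>V. cd v0 y * max 0 (h y - h v0))"
  unfolding eta_def sum_darts
  by (subst cond_weighted_sum_eq_edge_sum[where m = "\<lambda>y. max 0 (h y - h v0)"])
    (auto intro!: sum.cong simp: harm_oriented_def dhead_def dtail_def grad_def max_def)

definition outflow :: "'v \<Rightarrow> real" where
  "outflow x = (\<Sum>y\<in>V. cd x y * (h y - h x))"

lemma stat_zero_imp_cond_zero: "st x = 0 \<Longrightarrow> y \<in> V \<Longrightarrow> cd x y = 0"
  using sum_nonneg_eq_0_iff[OF finite_V, of "cd x"] cond_nonneg unfolding stat_eq by blast

lemma stat_zero_imp_h_zero: "x \<in> V - {v0, v1} \<Longrightarrow> st x = 0 \<Longrightarrow> h x = 0"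
  using harmonic unfolding trans_def by simp

lemma outflow_interior: assumes "x \<in> V - {v0, v1}" shows "outflow x = 0"
proof (cases "st x = 0")
  case True
  then show ?thesis unfolding outflow_def by (simp add: stat_zero_imp_cond_zero)
next
  case False
  have "h x * st x = (\<Sum>y\<in>V. cd x y * h y)"
    using harmonic[OF assms] False unfolding trans_def
    by (simp add: sum_divide_distrib[symmetric] field_simps)
  then show ?thesis
    unfolding outflow_def stat_eq by (simp add: algebra_simps sum_subtractf sum_distrib_left)
qed

lemma stat_pos: assumes "x \<in> V" "0 < h x" "h x < 1" shows "st x > 0"
proof -
  have "x \<in> V - {v0, v1}" using assms h_v0 h_v1 by auto
  then have "st x \<noteq> 0" using stat_zero_imp_h_zero assms by force
  then show ?thesis using sum_nonneg[of V "cd x"] cond_nonneg unfolding stat_eq by force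
qed

lemma voltage_nonneg: assumes "y \<in> V" shows "h y \<ge> 0"
proof (rule ccontr)
  assume "\<not> h y \<ge> 0"
  have "Min (h ` V) \<in> h ` V" using finite_V assms by (intro Min_in) auto
  then obtain z where z: "z \<in> V" "h z = Min (h ` V)" by auto
  have z_min: "h z \<le> h w" if "w \<in> V" for w
    using z that finite_V by simp
  have "h z < 0" using z_min[OF assms] \<open>\<not> h y \<ge> 0\<close> by simp
  then have z_int: "z \<in> V - {v0, v1}" using z h_v0 h_v1 by auto
  then have "st z \<noteq> 0" using stat_zero_imp_h_zero \<open>h z < 0\<close> by force
  then obtain w where w: "w \<in> V" "cd z w \<noteq> 0"
    unfolding stat_eq by (meson sum.neutral)
  have "\<forall>w\<in>V. cd z w * (h w - h z) = 0"
    using outflow_interior[OF z_int] z_min cond_nonneg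
      sum_nonneg_eq_0_iff[OF finite_V, of "\<lambda>w. cd z w * (h w - h z)"]
    unfolding outflow_def by simp
  then have "h w = h z" using w by auto
  then show False using cond_nonzero_levels_distinct[OF w(2)] by simp
qed

lemma eta_eq_outflow: "eta E ends c h v0 = outflow v0"
  unfolding eta_eq outflow_def using voltage_nonneg h_v0 by (intro sum.cong refl) auto

lemma sum_outflow_eq_cut:
  assumes "S \<subseteq> V"
  shows "(\<Sum>x\<in>S. outflow x) = (\<Sum>x\<in>S. \<Sum>y\<in>V - S. cd x y * (h y - h x))"
proof -
  define f where "f x y = cd x y * (h y - h x)" for x y
  have S_fin: "finite S" using assms finite_V by (rule finite_subset)
  have "(\<Sum>x\<in>S. \<Sum>y\<in>S. f x y) = (\<Sum>y\<in>S. \<Sum>x\<in>S. f x y)"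
    by (rule sum.swap)
  also have "\<dots> = - (\<Sum>y\<in>S. \<Sum>x\<in>S. f y x)"
    unfolding f_def by (simp add: cond_sym sum_negf[symmetric] algebra_simps)
  finally have "(\<Sum>x\<in>S. \<Sum>y\<in>S. f x y) = 0" by simp
  moreover have "outflow x = (\<Sum>y\<in>S. f x y) + (\<Sum>y\<in>V - S. f x y)" for x
    unfolding outflow_def f_def by (simp add: sum.subset_diff[OF assms finite_V] add.commute)
  ultimately show ?thesis unfolding f_def by (simp add: sum.distrib)
qed

lemma sum_seg_length_level:
  assumes "0 < b" "b < 1" "z \<in> V" "h z = b"
  shows "(\<Sum>y\<in>V. if h y = b then seg_length E ends c h y else 0) = eta E ends c h v0"
proof -
  define S where "S = {x\<in>V. h x < b}"
  have v0_S: "v0 \<in> S" and v1_S: "v1 \<notin> S" using v0_in_V h_v0 h_v1 assms unfolding S_def by auto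
  have S_sub: "S \<subseteq> V" and S_fin: "finite S" using finite_V unfolding S_def by auto
  have cross: "(\<Sum>x\<in>S. cd x y * (h y - h x)) = (if h y = b then seg_length E ends c h y else 0)"
    if y: "y \<in> V - S" for y
  proof (cases "h y = b")
    case True
    have "seg_length E ends c h y = (\<Sum>x\<in>S. cd y x * max 0 (h y - h x))"
      unfolding seg_length_eq
      by (rule sum.mono_neutral_right) (use True finite_V in \<open>auto simp: S_def\<close>)
    then show ?thesis using True by (auto simp: S_def cond_sym intro!: sum.cong)
  next
    case False
    then have "h y > b" using y unfolding S_def by auto
    then have "cd x y = 0" if "x \<in> S" for x
      using that cond_nonzero_skips_no_level[of x y z] assms unfolding S_def by auto
    then show ?thesis using False by simp
  qed
  have "eta E ends c h v0 = (\<Sum>x\<in>S. outflow x)"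
    unfolding eta_eq_outflow sum.remove[OF S_fin v0_S]
    using outflow_interior v1_S by (auto simp: S_def intro!: sum.neutral)
  also have "\<dots> = (\<Sum>y\<in>V - S. \<Sum>x\<in>S. cd x y * (h y - h x))"
    unfolding sum_outflow_eq_cut[OF S_sub] by (rule sum.swap)
  also have "\<dots> = (\<Sum>y\<in>V - S. if h y = b then seg_length E ends c h y else 0)"
    using cross by (rule sum.cong[OF refl])
  also have "\<dots> = (\<Sum>y\<in>V. if h y = b then seg_length E ends c h y else 0)"
    by (rule sum.mono_neutral_left) (auto simp: S_def finite_V)
  finally show ?thesis by simp
qed

definition gap_up :: "real \<Rightarrow> real" where
  "gap_up b = Min ((\<lambda>z. h z - b) ` {z\<in>V. h z > b})"

definition gap_down :: "real \<Rightarrow> real" where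
  "gap_down b = Min ((\<lambda>z. b - h z) ` {z\<in>V. h z < b})"

text \<open>The voltage of the walk performs a gambler's-ruin walk on the occupied levels: from level
  \<open>b\<close> it moves up by \<open>gap_up b\<close> or down by \<open>gap_down b\<close>, with probabilities inversely
  proportional to the step sizes (this is \<open>sum_trans_level\<close>).\<close>
definition level_trans :: "real \<Rightarrow> real \<Rightarrow> real" where
  "level_trans b b' =
     (if b' = b + gap_up b then gap_down b / (gap_up b + gap_down b)
      else if b' = b - gap_down b then gap_up b / (gap_up b + gap_down b) else 0)"

lemma gap_up:
  assumes "b < 1"
  shows "gap_up b > 0" and "\<exists>z\<in>V. h z = b + gap_up b"
    and "z \<in> V \<Longrightarrow> h z > b \<Longrightarrow> h z \<ge> b + gap_up b"
proof -
  let ?A = "(\<lambda>z. h z - b) ` {z\<in>V. h z > b}"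
  have fin: "finite ?A" using finite_V by auto
  have "?A \<noteq> {}" using v1_in_V h_v1 assms by auto
  then have "Min ?A \<in> ?A" using fin by (rule Min_in[rotated])
  then obtain w where "w \<in> V" "h w > b" "gap_up b = h w - b" unfolding gap_up_def by auto
  then show "gap_up b > 0" "\<exists>z\<in>V. h z = b + gap_up b" by auto
  show "h z \<ge> b + gap_up b" if "z \<in> V" "h z > b"
    using Min_le[OF fin, of "h z - b"] that unfolding gap_up_def by auto
qed

lemma gap_down:
  assumes "0 < b"
  shows "gap_down b > 0" and "\<exists>z\<in>V. h z = b - gap_down b"
    and "z \<in> V \<Longrightarrow> h z < b \<Longrightarrow> h z \<le> b - gap_down b"
proof -
  let ?A = "(\<lambda>z. b - h z) ` {z\<in>V. h z < b}"
  have fin: "finite ?A" using finite_V by auto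
  have "?A \<noteq> {}" using v0_in_V h_v0 assms by auto
  then have "Min ?A \<in> ?A" using fin by (rule Min_in[rotated])
  then obtain w where "w \<in> V" "h w < b" "gap_down b = b - h w" unfolding gap_down_def by auto
  then show "gap_down b > 0" "\<exists>z\<in>V. h z = b - gap_down b" by auto
  show "h z \<le> b - gap_down b" if "z \<in> V" "h z < b"
    using Min_le[OF fin, of "b - h z"] that unfolding gap_down_def by auto
qed

lemma gap_down_next_level_up:
  assumes "0 < b" "b < 1" "z \<in> V" "h z = b"
  shows "gap_down (b + gap_up b) = gap_up b"
proof -
  let ?b' = "b + gap_up b"
  have pos: "0 < ?b'" using gap_up(1)[of b] assms by simp
  have "b \<le> ?b' - gap_down ?b'" using gap_down(3)[OF pos assms(3)] gap_up(1)[of b] assms by simp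
  moreover have "\<not> b < ?b' - gap_down ?b'"
  proof
    assume lt: "b < ?b' - gap_down ?b'"
    obtain w where "w \<in> V" "h w = ?b' - gap_down ?b'" using gap_down(2)[OF pos] by blast
    then show False using gap_up(3)[OF assms(2), of w] lt gap_down(1)[OF pos] by simp
  qed
  ultimately show ?thesis by simp
qed

lemma gap_up_next_level_down:
  assumes "0 < b" "b < 1" "z \<in> V" "h z = b"
  shows "gap_up (b - gap_down b) = gap_down b"
proof -
  let ?b' = "b - gap_down b"
  have lt1: "?b' < 1" using gap_down(1)[of b] assms by simp
  have "b \<ge> ?b' + gap_up ?b'" using gap_up(3)[OF lt1 assms(3)] gap_down(1)[of b] assms by simp
  moreover have "\<not> b > ?b' + gap_up ?b'"
  proof
    assume gt: "b > ?b' + gap_up ?b'"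
    obtain w where "w \<in> V" "h w = ?b' + gap_up ?b'" using gap_up(2)[OF lt1] by blast
    then show False using gap_down(3)[OF assms(1), of w] gt gap_up(1)[OF lt1] by simp
  qed
  ultimately show ?thesis by simp
qed

lemma neighbour_level:
  assumes x: "x \<in> V" "0 < h x" "h x < 1" and "cd x y \<noteq> 0"
  shows "h y = h x + gap_up (h x) \<or> h y = h x - gap_down (h x)"
proof -
  have y: "y \<in> V" using cond_nonzero_in_V assms(4) by blast
  consider "h y > h x" | "h y < h x" using cond_nonzero_levels_distinct[OF assms(4)] by linarith
  then show ?thesis
  proof cases
    case 1
    obtain z where "z \<in> V" "h z = h x + gap_up (h x)" using gap_up(2)[OF x(3)] by blast
    then have "\<not> h y > h x + gap_up (h x)"
      using cond_nonzero_skips_no_level[OF assms(4)] gap_up(1)[OF x(3)] by force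
    then show ?thesis using gap_up(3)[OF x(3) y 1] by simp
  next
    case 2
    obtain z where "z \<in> V" "h z = h x - gap_down (h x)" using gap_down(2)[OF x(2)] by blast
    then have "\<not> h y < h x - gap_down (h x)"
      using cond_nonzero_skips_no_level[of y x z] assms(4) gap_down(1)[OF x(2)]
      by (force simp: cond_sym)
    then show ?thesis using gap_down(3)[OF x(2) y 2] by simp
  qed
qed

definition cond_up :: "'v \<Rightarrow> real" where
  "cond_up x = (\<Sum>y\<in>V. if h y > h x then cd x y else 0)"

definition cond_down :: "'v \<Rightarrow> real" where
  "cond_down x = (\<Sum>y\<in>V. if h y < h x then cd x y else 0)"

lemma stat_eq_cond_up_down: "st x = cond_up x + cond_down x"
  unfolding stat_eq cond_up_def cond_down_def sum.distrib[symmetric]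
  by (intro sum.cong refl) (use cond_nonzero_levels_distinct in force)

lemma seg_length_eq_gap_down:
  assumes "x \<in> V" "0 < h x" "h x < 1"
  shows "seg_length E ends c h x = gap_down (h x) * cond_down x"
  unfolding seg_length_eq cond_down_def sum_distrib_left
  using neighbour_level[OF assms] gap_up(1)[OF assms(3)] gap_down(1)[OF assms(2)]
  by (intro sum.cong refl) (fastforce simp: max_def)

text \<open>Harmonicity at \<open>x\<close>: the current entering from below equals the current leaving upwards.\<close>
lemma seg_length_eq_gap_up:
  assumes "x \<in> V" "0 < h x" "h x < 1"
  shows "seg_length E ends c h x = gap_up (h x) * cond_up x"
proof -
  have "x \<in> V - {v0, v1}" using assms h_v0 h_v1 by auto
  then have "0 = outflow x" by (rule outflow_interior[symmetric])
  also have "\<dots> = (\<Sum>y\<in>V. cd x y * max 0 (h y - h x)) - seg_length E ends c h x"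
    unfolding outflow_def seg_length_eq sum_subtractf[symmetric]
    by (intro sum.cong refl) (simp add: max_def algebra_simps)
  also have "(\<Sum>y\<in>V. cd x y * max 0 (h y - h x)) = gap_up (h x) * cond_up x"
    unfolding cond_up_def sum_distrib_left
    using neighbour_level[OF assms] gap_up(1)[OF assms(3)] gap_down(1)[OF assms(2)]
    by (intro sum.cong refl) (fastforce simp: max_def)
  finally show ?thesis by simp
qed

lemma sum_cond_level:
  assumes "x \<in> V" "0 < h x" "h x < 1"
  shows "(\<Sum>y\<in>V. if h y = b then cd x y else 0) =
    (if b = h x + gap_up (h x) then cond_up x
     else if b = h x - gap_down (h x) then cond_down x else 0)"
proof -
  have summand: "(if h y = b then cd x y else 0) =
    (if b = h x + gap_up (h x) then if h y > h x then cd x y else 0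
     else if b = h x - gap_down (h x) then if h y < h x then cd x y else 0 else 0)" for y
    using neighbour_level[OF assms, of y] gap_up(1)[OF assms(3)] gap_down(1)[OF assms(2)]
    by (cases "cd x y = 0") auto
  show ?thesis
    unfolding sum.cong[OF refl summand] cond_up_def cond_down_def
    by (cases "b = h x + gap_up (h x)"; cases "b = h x - gap_down (h x)") simp_all
qed

lemma sum_trans_level:
  assumes "x \<in> V" "0 < h x" "h x < 1"
  shows "(\<Sum>y\<in>V. if h y = b then p x y else 0) = level_trans (h x) b"
proof -
  have "(\<Sum>y\<in>V. if h y = b then p x y else 0) = (\<Sum>y\<in>V. if h y = b then cd x y else 0) / st x"
    unfolding trans_def sum_divide_distrib by (intro sum.cong refl) auto
  moreover have "gap_up (h x) * cond_up x = gap_down (h x) * cond_down x"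
    using seg_length_eq_gap_up[OF assms] seg_length_eq_gap_down[OF assms] by simp
  ultimately show ?thesis
    using stat_pos[OF assms] gap_up(1)[OF assms(3)] gap_down(1)[OF assms(2)]
    unfolding sum_cond_level[OF assms] level_trans_def stat_eq_cond_up_down
    by (simp add: frac_eq_eq algebra_simps)
qed

lemma seg_length_eq_stat:
  assumes "x \<in> V" "0 < h x" "h x < 1"
  shows "seg_length E ends c h x =
    gap_up (h x) * gap_down (h x) / (gap_up (h x) + gap_down (h x)) * st x"
  using seg_length_eq_gap_up[OF assms] seg_length_eq_gap_down[OF assms]
    gap_up(1)[OF assms(3)] gap_down(1)[OF assms(2)]
  unfolding stat_eq_cond_up_down by (simp add: field_simps)

abbreviation "\<mu> \<equiv> mu V E ends c h v0"

lemma mu_trans_eq_sum_cond_level: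
  assumes "0 < b" "b < 1"
  shows "(\<Sum>x\<in>V. \<mu> b x * p x y) =
    gap_up b * gap_down b / (gap_up b + gap_down b) / eta E ends c h v0
      * (\<Sum>x\<in>V. if h x = b then cd y x else 0)"
  unfolding sum_distrib_left
proof (intro sum.cong refl)
  fix x assume "x \<in> V"
  then show "\<mu> b x * p x y = gap_up b * gap_down b / (gap_up b + gap_down b) / eta E ends c h v0
      * (if h x = b then cd y x else 0)"
    using seg_length_eq_stat[of x] stat_pos[of x] assms
    by (auto simp: mu_def trans_def cond_sym)
qed

lemma mu_trans_level:
  assumes b: "0 < b" "b < 1" "z \<in> V" "h z = b" and y: "y \<in> V" "0 < h y" "h y < 1"
  shows "(\<Sum>x\<in>V. \<mu> b x * p x y) = level_trans b (h y) * \<mu> (h y) y"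
proof -
  define u d where "u = gap_up b" and "d = gap_down b"
  have u: "u > 0" and d: "d > 0" using gap_up(1) gap_down(1) b unfolding u_def d_def by auto
  have u': "gap_up (h y) > 0" using gap_up(1) y by auto
  define G where "G = (\<Sum>x\<in>V. if h x = b then cd y x else 0)"
  have G: "G = (if b = h y + gap_up (h y) then cond_up y
      else if b = h y - gap_down (h y) then cond_down y else 0)"
    unfolding G_def by (rule sum_cond_level[OF y])
  define K where "K = u * d / (u + d)"
  have "K * G = level_trans b (h y) * seg_length E ends c h y"
  proof -
    consider "h y = b + u" | "h y = b - d" | "h y \<noteq> b + u" "h y \<noteq> b - d" by blast
    then show ?thesis
    proof cases
      case 1
      then have "gap_down (h y) = u" using gap_down_next_level_up[OF b] unfolding u_def by simp
      then have G_eq: "G = cond_down y" and seg_eq: "seg_length E ends c h y = u * cond_down y"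
        using G 1 u u' seg_length_eq_gap_down[OF y] by simp_all
      have Q_eq: "level_trans b (h y) = d / (u + d)"
        using 1 unfolding level_trans_def u_def d_def by simp
      show ?thesis unfolding G_eq seg_eq Q_eq K_def using u d by (simp add: field_simps)
    next
      case 2
      then have "gap_up (h y) = d" using gap_up_next_level_down[OF b] unfolding d_def by simp
      then have G_eq: "G = cond_up y" and seg_eq: "seg_length E ends c h y = d * cond_up y"
        using G 2 seg_length_eq_gap_up[OF y] by simp_all
      have Q_eq: "level_trans b (h y) = u / (u + d)"
        using 2 u d unfolding level_trans_def u_def d_def by simp
      show ?thesis unfolding G_eq seg_eq Q_eq K_def using u d by (simp add: field_simps)
    next
      case 3
      have "b \<noteq> h y + gap_up (h y)"
        using gap_down_next_level_up[OF y(2,3,1) refl] 3 unfolding d_def by force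
      moreover have "b \<noteq> h y - gap_down (h y)"
        using gap_up_next_level_down[OF y(2,3,1) refl] 3 unfolding u_def by force
      ultimately show ?thesis using 3 unfolding G level_trans_def u_def d_def by simp
    qed
  qed
  then show ?thesis
    unfolding mu_trans_eq_sum_cond_level[OF b(1,2)] G_def[symmetric] u_def[symmetric] d_def[symmetric]
      K_def[symmetric]
    using y by (simp add: mu_def)
qed

lemma sum_level_step:
  assumes "0 < b" "b < 1" "\<And>x. x \<in> V \<Longrightarrow> init x \<noteq> 0 \<Longrightarrow> h x = b"
  shows "(\<Sum>y\<in>V. if h y = b' then \<Sum>x\<in>V. init x * p x y else 0) = (\<Sum>x\<in>V. init x) * level_trans b b'"
proof -
  have "(\<Sum>y\<in>V. if h y = b' then \<Sum>x\<in>V. init x * p x y else 0) =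
      (\<Sum>y\<in>V. \<Sum>x\<in>V. init x * (if h y = b' then p x y else 0))"
    by (intro sum.cong) auto
  also have "\<dots> = (\<Sum>x\<in>V. init x * (\<Sum>y\<in>V. if h y = b' then p x y else 0))"
    by (subst sum.swap) (simp add: sum_distrib_left)
  also have "\<dots> = (\<Sum>x\<in>V. init x * level_trans b b')"
  proof (intro sum.cong refl)
    fix x assume "x \<in> V"
    then show "init x * (\<Sum>y\<in>V. if h y = b' then p x y else 0) = init x * level_trans b b'"
      using sum_trans_level[of x b'] assms by (cases "init x = 0") auto
  qed
  finally show ?thesis by (simp add: sum_distrib_right)
qed

lemma walk_prob_levels:
  assumes "\<forall>n\<le>N. 0 < as n \<and> as n < 1" "\<And>x. x \<in> V \<Longrightarrow> init x \<noteq> 0 \<Longrightarrow> h x = as 0"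
  shows "walk_prob V E ends c init N (\<lambda>xs. \<forall>n\<in>{1..N}. h (xs ! n) = as n)
       = (\<Sum>x\<in>V. init x) * (\<Prod>n<N. level_trans (as n) (as (Suc n)))"
  using assms
proof (induction N arbitrary: init as)
  case 0
  then show ?case by (simp add: walk_prob_0[OF finite_V])
next
  case (Suc N)
  define init' where "init' y = (if h y = as 1 then \<Sum>x\<in>V. init x * p x y else 0)" for y
  have "walk_prob V E ends c init (Suc N) (\<lambda>xs. \<forall>n\<in>{1..Suc N}. h (xs ! n) = as n) =
      walk_prob V E ends c init' N (\<lambda>ys. \<forall>n\<in>{1..N}. h (ys ! n) = as (Suc n))"
    unfolding init'_def by (rule walk_prob_Suc_level[OF finite_V]) (simp only: ball_atLeastAtMost_Suc, simp)
  also have "\<dots> = (\<Sum>y\<in>V. init' y) * (\<Prod>n<N. level_trans (as (Suc n)) (as (Suc (Suc n))))"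
    using Suc.prems(1) by (intro Suc.IH) (auto simp: init'_def split: if_splits)
  also have "(\<Sum>y\<in>V. init' y) = (\<Sum>x\<in>V. init x) * level_trans (as 0) (as 1)"
    unfolding init'_def using Suc.prems by (intro sum_level_step) auto
  finally show ?case by (simp add: prod.lessThan_Suc_shift del: prod.lessThan_Suc)
qed

lemma walk_prob_levels_at:
  assumes "\<forall>n\<le>N. 0 < as n \<and> as n < 1 \<and> (\<exists>z\<in>V. h z = as n)" "i \<le> N" "x \<in> V"
  shows "walk_prob V E ends c (\<lambda>y. C * \<mu> (as 0) y) N
           (\<lambda>xs. xs ! i = x \<and> (\<forall>n\<in>{1..N}. h (xs ! n) = as n))
       = C * \<mu> (as i) x * (\<Prod>n<N. level_trans (as n) (as (Suc n)))"
  using assms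
proof (induction i arbitrary: N C as)
  case 0
  have "walk_prob V E ends c (\<lambda>y. C * \<mu> (as 0) y) N
           (\<lambda>xs. xs ! 0 = x \<and> (\<forall>n\<in>{1..N}. h (xs ! n) = as n))
     = walk_prob V E ends c (\<lambda>y. if y = x then C * \<mu> (as 0) y else 0) N
           (\<lambda>xs. \<forall>n\<in>{1..N}. h (xs ! n) = as n)"
    by (rule walk_prob_restrict_start[OF finite_V])
  also have "\<dots> = C * \<mu> (as 0) x * (\<Prod>n<N. level_trans (as n) (as (Suc n)))"
    using 0 finite_V by (subst walk_prob_levels) (auto simp: mu_def split: if_splits)
  finally show ?case by simp
next
  case (Suc i)
  then obtain N' where N: "N = Suc N'" by (cases N) auto
  obtain z where z: "z \<in> V" "h z = as 0" and as0: "0 < as 0" "as 0 < 1"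
    using Suc.prems(1) by auto
  have as1: "0 < as 1" "as 1 < 1" using Suc.prems(1) N by auto
  define C' where "C' = C * level_trans (as 0) (as 1)"
  have "walk_prob V E ends c (\<lambda>y. C * \<mu> (as 0) y) N
           (\<lambda>xs. xs ! Suc i = x \<and> (\<forall>n\<in>{1..N}. h (xs ! n) = as n))
    = walk_prob V E ends c (\<lambda>y. if h y = as 1 then \<Sum>x'\<in>V. C * \<mu> (as 0) x' * p x' y else 0) N'
           (\<lambda>ys. ys ! i = x \<and> (\<forall>n\<in>{1..N'}. h (ys ! n) = as (Suc n)))"
    unfolding N by (rule walk_prob_Suc_level[OF finite_V]) (simp only: ball_atLeastAtMost_Suc, auto)
  also have "\<dots> = walk_prob V E ends c (\<lambda>y. C' * \<mu> (as (Suc 0)) y) N'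
           (\<lambda>ys. ys ! i = x \<and> (\<forall>n\<in>{1..N'}. h (ys ! n) = as (Suc n)))"
  proof (rule walk_prob_cong)
    fix y assume y: "y \<in> V"
    have "(\<Sum>x'\<in>V. C * \<mu> (as 0) x' * p x' y) = C * (\<Sum>x'\<in>V. \<mu> (as 0) x' * p x' y)"
      by (simp add: sum_distrib_left mult.assoc)
    then show "(if h y = as 1 then \<Sum>x'\<in>V. C * \<mu> (as 0) x' * p x' y else 0) = C' * \<mu> (as (Suc 0)) y"
      using mu_trans_level[OF as0 z y] as1 unfolding C'_def by (auto simp: mu_def)
  qed simp
  also have "\<dots> = C' * \<mu> (as (Suc i)) x * (\<Prod>n<N'. level_trans (as (Suc n)) (as (Suc (Suc n))))"
    using Suc.prems N by (intro Suc.IH) auto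
  finally show ?case
    unfolding N C'_def by (simp add: prod.lessThan_Suc_shift mult_ac del: prod.lessThan_Suc)
qed

lemma level_trans_nonzero_if_walk_prob_nonzero:
  assumes "walk_prob V E ends c init N (\<lambda>xs. h (xs ! Suc n) = b' \<and> h (xs ! n) = b) \<noteq> 0"
    and "n < N" "0 < b" "b < 1"
  shows "level_trans b b' \<noteq> 0" and "\<exists>y\<in>V. h y = b'"
proof -
  obtain xs where xs: "xs \<in> walk_paths V N" "h (xs ! Suc n) = b'" "h (xs ! n) = b"
    and "init (xs ! 0) * (\<Prod>k<N. p (xs ! k) (xs ! Suc k)) \<noteq> 0"
    using assms(1) unfolding walk_prob_def by (auto elim: sum.not_neutral_contains_not_neutral)
  then have "p (xs ! n) (xs ! Suc n) \<noteq> 0" using assms(2) by auto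
  moreover have x: "xs ! n \<in> V" and y: "xs ! Suc n \<in> V"
    using walk_paths_nth_in[OF xs(1)] assms(2) by auto
  moreover have "p (xs ! n) (xs ! Suc n) \<le> (\<Sum>y\<in>V. if h y = b' then p (xs ! n) y else 0)"
    using member_le_sum[OF y, of "\<lambda>y. if h y = b' then p (xs ! n) y else 0"] xs(2) finite_V
    by (simp add: trans_nonneg)
  ultimately show "level_trans b b' \<noteq> 0" "\<exists>y\<in>V. h y = b'"
    using sum_trans_level[OF x] trans_nonneg[of "xs ! n" "xs ! Suc n"] xs assms(3,4) by force+
qed

lemma sum_mu_level:
  assumes "eta E ends c h v0 \<noteq> 0" "0 < b" "b < 1" "z \<in> V" "h z = b"
  shows "(\<Sum>x\<in>V. \<mu> b x) = 1"
proof -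
  have "(\<Sum>x\<in>V. \<mu> b x) = (\<Sum>x\<in>V. if h x = b then seg_length E ends c h x else 0) / eta E ends c h v0"
    unfolding sum_divide_distrib by (intro sum.cong refl) (auto simp: mu_def)
  then show ?thesis using sum_seg_length_level[OF assms(2-)] assms(1) by simp
qed

end

theorem mainTheorem8:
  fixes V :: "'v set" and E :: "'e set" and ends :: "'e \<Rightarrow> 'v \<times> 'v"
    and c :: "'e \<Rightarrow> real" and v0 v1 :: 'v and h :: "'v \<Rightarrow> real"
    and a :: real and N :: nat and as :: "nat \<Rightarrow> real"
  assumes map: "doubly_marked_map V E ends c v0 v1"
    and volt: "is_voltage V E ends c v0 v1 h"
    and levels_vertices: "\<forall>x\<in>V. \<forall>e\<in>E. \<forall>t::real. 0 < t \<and> t < 1 \<longrightarrow>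
           (1 - t) * h (fst (ends e)) + t * h (snd (ends e)) \<noteq> h x"
    and a_range: "0 < a" "a < 1"
    and level_a_sub: "\<forall>e\<in>E. \<forall>t::real. 0 < t \<and> t < 1 \<longrightarrow>
           (1 - t) * h (fst (ends e)) + t * h (snd (ends e)) \<noteq> a"
    and level_a_ne: "\<exists>x\<in>V. h x = a"
    and as0: "as 0 = a"
    and as_range: "\<forall>n\<le>N. 0 < as n \<and> as n < 1"
    and admissible: "\<forall>n<N.
           walk_prob V E ends c (mu V E ends c h v0 a) N
              (\<lambda>xs. h (xs ! Suc n) = as (Suc n) \<and> h (xs ! n) = as n)
           / walk_prob V E ends c (mu V E ends c h v0 a) N (\<lambda>xs. h (xs ! n) = as n) > 0"
  shows "\<forall>i\<le>N. \<forall>x\<in>V. h x = as i \<longrightarrow>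
           walk_prob V E ends c (mu V E ends c h v0 a) N
              (\<lambda>xs. xs ! i = x \<and> (\<forall>n\<in>{1..N}. h (xs ! n) = as n))
           / walk_prob V E ends c (mu V E ends c h v0 a) N (\<lambda>xs. \<forall>n\<in>{1..N}. h (xs ! n) = as n)
           = mu V E ends c h v0 (as i) x"
proof -
  \<comment> \<open>If \<open>\<eta> = 0\<close>, division by zero makes every
    \<open>\<mu> b\<close> vanish and both sides of the claim are 0.\<close>
  interpret voltage_network V E ends c v0 v1 h
    using map volt levels_vertices unfolding doubly_marked_map_def by unfold_locales auto
  let ?P = "\<Prod>n<N. level_trans (as n) (as (Suc n))"
  have step: "level_trans (as n) (as (Suc n)) \<noteq> 0 \<and> (\<exists>y\<in>V. h y = as (Suc n))" if "n < N" for n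
  proof -
    have "walk_prob V E ends c (\<mu> a) N (\<lambda>xs. h (xs ! Suc n) = as (Suc n) \<and> h (xs ! n) = as n) \<noteq> 0"
      using admissible that by fastforce
    then show ?thesis
      using level_trans_nonzero_if_walk_prob_nonzero[OF _ that] as_range that by simp
  qed
  have levels: "\<forall>n\<le>N. 0 < as n \<and> as n < 1 \<and> (\<exists>z\<in>V. h z = as n)"
  proof (intro allI impI)
    fix n assume "n \<le> N"
    then show "0 < as n \<and> as n < 1 \<and> (\<exists>z\<in>V. h z = as n)"
      using as_range step[of "n - 1"] level_a_ne as0 by (cases n) auto
  qed
  have "?P \<noteq> 0" using step by simp
  moreover have "walk_prob V E ends c (\<mu> a) N (\<lambda>xs. \<forall>n\<in>{1..N}. h (xs ! n) = as n)
      = (\<Sum>x\<in>V. \<mu> a x) * ?P"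
    using as_range as0 by (intro walk_prob_levels) (auto simp: mu_def split: if_splits)
  moreover have "walk_prob V E ends c (\<mu> a) N (\<lambda>xs. xs ! i = x \<and> (\<forall>n\<in>{1..N}. h (xs ! n) = as n))
      = \<mu> (as i) x * ?P" if "i \<le> N" "x \<in> V" for i x
    using walk_prob_levels_at[OF levels that, of 1] as0 by simp
  moreover have "(\<Sum>x\<in>V. \<mu> a x) = 1" if "eta E ends c h v0 \<noteq> 0"
    using level_a_ne sum_mu_level[OF that a_range] by blast
  ultimately show ?thesis by (cases "eta E ends c h v0 = 0") (auto simp: mu_def)
qed

end
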